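(* Let $\left\{\mathcal{N}^{(i)}_{A \to B }\right\}_{i=1}^s$ be a compound quantum channel and let $\varepsilon \in (0,1)$. For any $(R,\varepsilon)$-entanglement assisted code for this compound quantum channel, it holds that $$R \leq \max _{|\psi\rangle\langle\psi|_{A A'}} \left( \min_{i \in [1:s]} \mathrm{I}^{\varepsilon}_{\mathrm{H}}(B:A')_{\mathcal{N}^{(i)}_{A \to B } (|\psi\rangle\langle\psi|_{AA'})} \right).$$
   Context: Here $A'\equiv A$ is a purifying register. For quantum states $\rho,\sigma$, $\mathrm{D}^{\varepsilon}_{\mathrm{H}}(\rho\|\sigma) := \max_{0\preceq M\preceq \mathbb{I},\ \mathrm{Tr}[M\rho]\geq 1-\varepsilon} -\log\mathrm{Tr}[M\sigma]$, and for a bipartite state $\rho_{BA'}$, $\mathrm{I}^{\varepsilon}_{\mathrm{H}}(B:A')_{\rho} := \min_{\sigma_B} \mathrm{D}^{\varepsilon}_{\mathrm{H}}(\rho_{BA'}\|\sigma_B\otimes\rho_{A'})$ over all quantum states $\sigma_B$. An $(R,\varepsilon)$-entanglement assisted code for the compound channel $\{\mathcal{N}^{(i)}_{A\to B}\}_{i=1}^s$ (channel index unknown to both parties) consists of a shared entangled state $|\theta\rangle_{E_AE_B}$, an encoding $\mathcal{E}: ME_A\to A$ (messages in $[1:2^R]$) and a decoding $\mathcal{D}: BE_B\to M'$, with $\Pr\{M'\neq m\mid M=m\}\leq\varepsilon$ for all messages $m$ and all $i\in[1:s]$. *)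

theory Defs
  imports "HOL-Analysis.Analysis"
begin

text \<open>Finite-dimensional quantum systems are modelled by a finite basis type 'a;
  an operator on the system is its matrix with respect to that basis.\<close>

type_synonym 'a qop = "'a \<Rightarrow> 'a \<Rightarrow> complex"

definition qtrace :: "('a::finite) qop \<Rightarrow> complex" where
  "qtrace X = (\<Sum>i\<in>UNIV. X i i)"

definition qmult :: "('a::finite) qop \<Rightarrow> 'a qop \<Rightarrow> 'a qop" where
  "qmult X Y = (\<lambda>i j. \<Sum>k\<in>UNIV. X i k * Y k j)"

definition qid :: "'a qop" where
  "qid = (\<lambda>i j. if i = j then 1 else 0)"

definition qtensor :: "'a qop \<Rightarrow> 'b qop \<Rightarrow> ('a \<times> 'b) qop" where
  "qtensor X Y = (\<lambda>(a,b) (a',b'). X a a' * Y b b')"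

definition ptrace1 :: "(('a::finite) \<times> 'b) qop \<Rightarrow> 'b qop" where
  "ptrace1 X = (\<lambda>b b'. \<Sum>a\<in>UNIV. X (a,b) (a,b'))"

definition ketbra :: "('a \<Rightarrow> complex) \<Rightarrow> 'a qop" where
  "ketbra v = (\<lambda>i j. v i * cnj (v j))"

definition unit_vec :: "(('a::finite) \<Rightarrow> complex) \<Rightarrow> bool" where
  "unit_vec v \<longleftrightarrow> (\<Sum>i\<in>UNIV. cmod (v i) ^ 2) = 1"

definition psd_on :: "'a set \<Rightarrow> 'a qop \<Rightarrow> bool" where
  "psd_on S X \<longleftrightarrow> (\<forall>v::'a \<Rightarrow> complex.
     (let q = (\<Sum>i\<in>S. \<Sum>j\<in>S. cnj (v i) * X i j * v j) in Im q = 0 \<and> Re q \<ge> 0))"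

abbreviation psd :: "('a::finite) qop \<Rightarrow> bool" where
  "psd X \<equiv> psd_on UNIV X"

definition density :: "('a::finite) qop \<Rightarrow> bool" where
  "density \<rho> \<longleftrightarrow> psd \<rho> \<and> qtrace \<rho> = 1"

text \<open>Complete positivity: for every ancilla dimension n, id_n \<otimes> N maps positive
  operators on (ancilla \<otimes> input) to positive operators. For a linear N the
  action of id_n \<otimes> N is blockwise: the (i,j) block of the output is N applied
  to the (i,j) block of the input.\<close>
definition qlinear :: "('a qop \<Rightarrow> 'b qop) \<Rightarrow> bool" where
  "qlinear N \<longleftrightarrow> (\<forall>X Y. N (\<lambda>i j. X i j + Y i j) = (\<lambda>i j. N X i j + N Y i j))
                 \<and> (\<forall>c X. N (\<lambda>i j. c * X i j) = (\<lambda>i j. c * N X i j))"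

definition completely_positive :: "(('a::finite) qop \<Rightarrow> ('b::finite) qop) \<Rightarrow> bool" where
  "completely_positive N \<longleftrightarrow> (\<forall>n::nat. \<forall>X :: (nat \<times> 'a) qop.
     psd_on ({..<n} \<times> UNIV) X \<longrightarrow>
     psd_on ({..<n} \<times> UNIV)
       (\<lambda>(i,b) (j,b'). N (\<lambda>a a'. X (i,a) (j,a')) b b'))"

definition channel :: "(('a::finite) qop \<Rightarrow> ('b::finite) qop) \<Rightarrow> bool" where
  "channel N \<longleftrightarrow> qlinear N \<and> completely_positive N \<and> (\<forall>X. qtrace (N X) = qtrace X)"

definition apply_first :: "('a qop \<Rightarrow> 'b qop) \<Rightarrow> ('a \<times> 'c) qop \<Rightarrow> ('b \<times> 'c) qop" where
  "apply_first N X = (\<lambda>(b,c) (b',c'). N (\<lambda>a a'. X (a,c) (a',c')) b b')"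

definition neglog2 :: "real \<Rightarrow> ereal" where
  "neglog2 t = (if t = 0 then \<infinity> else ereal (- log 2 t))"

definition DH :: "real \<Rightarrow> ('a::finite) qop \<Rightarrow> 'a qop \<Rightarrow> ereal" where
  "DH \<epsilon> \<rho> \<sigma> = Sup { neglog2 (Re (qtrace (qmult M \<sigma>))) | M.
       psd M \<and> psd (\<lambda>i j. qid i j - M i j) \<and> Re (qtrace (qmult M \<rho>)) \<ge> 1 - \<epsilon> }"

definition IH :: "real \<Rightarrow> (('b::finite) \<times> ('a::finite)) qop \<Rightarrow> ereal" where
  "IH \<epsilon> \<rho> = Inf { DH \<epsilon> \<rho> (qtensor \<sigma> (ptrace1 \<rho>)) | \<sigma> :: 'b qop. density \<sigma> }"

definition povm :: "nat \<Rightarrow> (nat \<Rightarrow> ('a::finite) qop) \<Rightarrow> bool" where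
  "povm K D \<longleftrightarrow> (\<forall>m\<in>{1..K}. psd (D m)) \<and> (\<lambda>i j. \<Sum>m\<in>{1..K}. D m i j) = qid"

text \<open>Entanglement-assisted code with K messages for the compound channel
  {N i}_{i=1..s}: shared pure state theta on E_A \<otimes> E_B, encoding channels
  Enc m : E_A \<rightarrow> A for each message m, decoding POVM Dec on B \<otimes> E_B, with
  error probability at most eps for every message and every channel index.\<close>
definition EA_code ::
  "nat \<Rightarrow> real \<Rightarrow> nat \<Rightarrow> (nat \<Rightarrow> ('a::finite) qop \<Rightarrow> ('b::finite) qop)
   \<Rightarrow> (('ea::finite) \<times> ('eb::finite) \<Rightarrow> complex)
   \<Rightarrow> (nat \<Rightarrow> 'ea qop \<Rightarrow> 'a qop) \<Rightarrow> (nat \<Rightarrow> ('b \<times> 'eb) qop) \<Rightarrow> bool" where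
  "EA_code K \<epsilon> s N \<theta> Enc Dec \<longleftrightarrow>
     unit_vec \<theta> \<and> (\<forall>m\<in>{1..K}. channel (Enc m)) \<and> povm K Dec \<and>
     (\<forall>m\<in>{1..K}. \<forall>i\<in>{1..s}.
        1 - Re (qtrace (qmult (Dec m)
                 (apply_first (N i) (apply_first (Enc m) (ketbra \<theta>))))) \<le> \<epsilon>)"

end

(*
  The decoder of a code becomes a hypothesis test on B (x) A'. Let omega be the state
  (1/K) sum_m |m><m| (x) (Enc_m (x) id)(theta) on A (x) M (x) E_B. Writing omega as a Gram
  matrix and taking a polar decomposition of the factor (both by Cholesky elimination) gives a unit
  vector psi on A (x) A' and a contraction V : A' -> M E_B (x) K with
  omega = Tr_K (I (x) V) psi psi* (I (x) V)*. Pulling T = sum_m |m><m| (x) Dec_m back along V gives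
  a test 0 <= M <= I with Tr[M N(psi)] = Tr[T N(omega)] >= 1 - eps for every channel N of the
  family, while Tr[M (sigma (x) psi_A')] = Tr[T (sigma (x) omega_{M E_B})] = 1/K for every state
  sigma, because the Dec_m sum to the identity. Hence I_H^eps(B:A') >= log K = R at N(psi).
*)
theory Submission
  imports Defs
begin

section \<open>Quadratic forms, traces and positivity\<close>

lemma sum_UNIV_prod: "(\<Sum>i\<in>UNIV. f i) = (\<Sum>a\<in>UNIV. \<Sum>b\<in>UNIV. f (a, b))"
  by (simp add: sum.cartesian_product)

definition qform :: "'s set \<Rightarrow> 's qop \<Rightarrow> ('s \<Rightarrow> complex) \<Rightarrow> complex" where
  "qform S X v = (\<Sum>i\<in>S. \<Sum>j\<in>S. cnj (v i) * X i j * v j)"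

lemma psd_on_iff_qform: "psd_on S X \<longleftrightarrow> (\<forall>v. Im (qform S X v) = 0 \<and> Re (qform S X v) \<ge> 0)"
  unfolding psd_on_def qform_def Let_def by simp

lemma qform_cong:
  assumes "\<And>i j. i \<in> S \<Longrightarrow> j \<in> S \<Longrightarrow> X i j = Y i j"
  shows "qform S X v = qform S Y v"
  unfolding qform_def using assms by (auto intro!: sum.cong)

lemma qform_diff: "qform S (\<lambda>i j. X i j - Y i j) v = qform S X v - qform S Y v"
  unfolding qform_def by (simp add: sum_subtractf algebra_simps)

lemma qform_sum:
  "qform S (\<lambda>i j. \<Sum>m\<in>F. D m i j) v = (\<Sum>m\<in>F. qform S (D m) v)"
  unfolding qform_def by (simp add: sum_distrib_left sum_distrib_right sum.swap[of _ F])

lemma qform_qid: "qform UNIV (qid :: ('a::finite) qop) v = of_real (\<Sum>i\<in>UNIV. (cmod (v i))\<^sup>2)"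
proof -
  have "qform UNIV (qid :: ('a::finite) qop) v = (\<Sum>i\<in>UNIV. v i * cnj (v i))"
    unfolding qform_def qid_def by (simp add: if_distrib if_distribR mult.commute cong: if_cong)
  then show ?thesis by (simp only: of_real_sum complex_norm_square)
qed

lemma qform_reindex:
  assumes "bij_betw h T S"
  shows "qform S X v = qform T (\<lambda>i j. X (h i) (h j)) (\<lambda>i. v (h i))"
  unfolding qform_def
  by (subst sum.reindex_bij_betw[OF assms, symmetric], rule sum.cong[OF refl],
      subst sum.reindex_bij_betw[OF assms, symmetric], rule refl)

lemma qform_supported:
  assumes "finite S" "T \<subseteq> S" "\<And>i. i \<notin> T \<Longrightarrow> v i = 0"
  shows "qform S X v = qform T X v"
proof -
  have "qform S X v = (\<Sum>i\<in>T. \<Sum>j\<in>S. cnj (v i) * X i j * v j)"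
    unfolding qform_def by (rule sum.mono_neutral_right) (use assms in auto)
  also have "\<dots> = qform T X v"
    unfolding qform_def
    by (rule sum.cong[OF refl], rule sum.mono_neutral_right) (use assms in auto)
  finally show ?thesis .
qed

lemma qform_two_points:
  assumes "finite S" "i \<in> S" "j \<in> S" "i \<noteq> j"
  shows "qform S X (\<lambda>k. if k = i then \<alpha> else if k = j then \<beta> else 0) =
    cnj \<alpha> * X i i * \<alpha> + cnj \<alpha> * X i j * \<beta> + cnj \<beta> * X j i * \<alpha> + cnj \<beta> * X j j * \<beta>"
proof -
  have "qform S X (\<lambda>k. if k = i then \<alpha> else if k = j then \<beta> else 0) =
        qform {i,j} X (\<lambda>k. if k = i then \<alpha> else if k = j then \<beta> else 0)"
    by (rule qform_supported) (use assms in auto)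
  then show ?thesis
    unfolding qform_def using assms(4) by (simp add: algebra_simps)
qed

lemma qform_one_point:
  assumes "finite S" "i \<in> S"
  shows "qform S X (\<lambda>k. if k = i then \<alpha> else 0) = cnj \<alpha> * X i i * \<alpha>"
proof -
  have "qform S X (\<lambda>k. if k = i then \<alpha> else 0) = qform {i} X (\<lambda>k. if k = i then \<alpha> else 0)"
    by (rule qform_supported) (use assms in auto)
  then show ?thesis unfolding qform_def by simp
qed

lemma psd_on_diag:
  assumes "finite S" "psd_on S X" "i \<in> S"
  shows "Im (X i i) = 0" "Re (X i i) \<ge> 0"
  using assms qform_one_point[OF assms(1,3), of X 1] unfolding psd_on_iff_qform
  by (metis complex_cnj_one mult.right_neutral mult_1)+

lemma psd_on_hermitian:
  assumes "finite S" "psd_on S X" "i \<in> S" "j \<in> S"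
  shows "X i j = cnj (X j i)"
proof (cases "i = j")
  case True
  then show ?thesis using psd_on_diag[OF assms(1,2,3)] by (simp add: complex_eq_iff)
next
  case False
  have "Im (X i i) = 0" "Im (X j j) = 0"
    using psd_on_diag(1)[OF assms(1,2)] assms(3,4) by blast+
  moreover have "Im (qform S X (\<lambda>k. if k = i then 1 else if k = j then 1 else 0)) = 0"
    and "Im (qform S X (\<lambda>k. if k = i then 1 else if k = j then \<i> else 0)) = 0"
    using assms(2) unfolding psd_on_iff_qform by blast+
  ultimately show ?thesis
    unfolding qform_two_points[OF assms(1,3,4) False] by (simp add: complex_eq_iff)
qed

lemma psd_on_zero_diag_row:
  assumes "finite S" "psd_on S X" "p \<in> S" "j \<in> S" "X p p = 0"
  shows "X p j = 0"
proof (rule ccontr)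
  assume ne: "X p j \<noteq> 0"
  then have pj: "p \<noteq> j" using assms by auto
  \<comment> \<open>Test with the vector that is -r X p j at p and 1 at j, for r large.\<close>
  define r where "r = (Re (X j j) + 1) / (2 * (cmod (X p j))\<^sup>2)"
  have h: "X j p = cnj (X p j)" using psd_on_hermitian[OF assms(1,2,4,3)] .
  have "Re (qform S X (\<lambda>k. if k = p then - (of_real r * X p j) else if k = j then 1 else 0)) \<ge> 0"
    using assms(2) unfolding psd_on_iff_qform by blast
  also have "Re (qform S X (\<lambda>k. if k = p then - (of_real r * X p j) else if k = j then 1 else 0))
      = Re (X j j) - 2 * r * (cmod (X p j))\<^sup>2"
    unfolding qform_two_points[OF assms(1,3,4) pj] using assms(5) h
    by (simp add: cmod_power2 algebra_simps power2_eq_square[of "Re _"] power2_eq_square[of "Im _"])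
  also have "2 * r * (cmod (X p j))\<^sup>2 = Re (X j j) + 1" unfolding r_def using ne by simp
  finally show False by simp
qed

lemma psd_on_subset:
  assumes "finite S" "T \<subseteq> S" "psd_on S X"
  shows "psd_on T X"
  unfolding psd_on_iff_qform
proof
  fix v :: "'a \<Rightarrow> complex"
  define w where "w i = (if i \<in> T then v i else 0)" for i
  have "qform S X w = qform T X w" by (rule qform_supported) (use assms in \<open>auto simp: w_def\<close>)
  also have "qform T X w = qform T X v" unfolding qform_def w_def by (rule sum.cong) auto
  finally show "Im (qform T X v) = 0 \<and> 0 \<le> Re (qform T X v)"
    using assms(3) unfolding psd_on_iff_qform by metis
qed

lemma qform_gram:
  "qform S (\<lambda>i j. \<Sum>k\<in>K. f k i * cnj (f k j)) v =
   (\<Sum>k\<in>K. of_real ((cmod (\<Sum>i\<in>S. cnj (v i) * f k i))\<^sup>2))"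
proof -
  have "qform S (\<lambda>i j. \<Sum>k\<in>K. f k i * cnj (f k j)) v =
     (\<Sum>i\<in>S. \<Sum>j\<in>S. \<Sum>k\<in>K. (cnj (v i) * f k i) * cnj (cnj (v j) * f k j))"
    unfolding qform_def by (simp add: sum_distrib_left sum_distrib_right mult_ac)
  also have "\<dots> = (\<Sum>k\<in>K. \<Sum>i\<in>S. \<Sum>j\<in>S. (cnj (v i) * f k i) * cnj (cnj (v j) * f k j))"
    unfolding sum.cartesian_product
    by (rule sum.reindex_bij_witness[where i="\<lambda>(k,i,j). (i,j,k)" and j="\<lambda>(i,j,k). (k,i,j)"]) auto
  also have "\<dots> = (\<Sum>k\<in>K. (\<Sum>i\<in>S. cnj (v i) * f k i) * cnj (\<Sum>i\<in>S. cnj (v i) * f k i))"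
    by (simp only: sum_product cnj_sum)
  also have "\<dots> = (\<Sum>k\<in>K. of_real ((cmod (\<Sum>i\<in>S. cnj (v i) * f k i))\<^sup>2))"
    by (simp only: complex_norm_square)
  finally show ?thesis .
qed

lemma psd_on_gram: "psd_on S (\<lambda>i j. \<Sum>k\<in>K. f k i * cnj (f k j))"
  unfolding psd_on_iff_qform qform_gram by (simp add: sum_nonneg)

lemma psd_ketbra: "psd (ketbra v)"
  using psd_on_gram[where K="UNIV :: unit set" and f="\<lambda>_. v"] unfolding ketbra_def by simp

lemma qform_divide: "qform S (\<lambda>i j. X i j / c) v = qform S X v / c"
  unfolding qform_def by (simp add: sum_divide_distrib)

lemma psd_on_divide_of_nat:
  assumes "psd_on S X"
  shows "psd_on S (\<lambda>i j. X i j / of_nat n)"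
  using assms unfolding psd_on_iff_qform qform_divide by (simp add: Re_divide_of_nat Im_divide_of_nat)

lemma ptrace1_divide: "ptrace1 (\<lambda>i j. X i j / c) = (\<lambda>i j. ptrace1 X i j / c)"
  unfolding ptrace1_def by (simp add: sum_divide_distrib)

lemma qtensor_divide: "qtensor \<sigma> (\<lambda>i j. X i j / c) = (\<lambda>i j. qtensor \<sigma> X i j / c)"
  unfolding qtensor_def by (simp add: case_prod_unfold)

lemma qtrace_qmult_divide: "qtrace (qmult D (\<lambda>i j. X i j / c)) = qtrace (qmult D X) / c"
  unfolding qtrace_def qmult_def by (simp add: sum_divide_distrib)

lemma qtrace_qmult_sum: "qtrace (qmult (\<lambda>i j. \<Sum>m\<in>F. D m i j) Y) = (\<Sum>m\<in>F. qtrace (qmult (D m) Y))"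
proof -
  have "qtrace (qmult (\<lambda>i j. \<Sum>m\<in>F. D m i j) Y) = (\<Sum>i\<in>UNIV. \<Sum>k\<in>UNIV. \<Sum>m\<in>F. D m i k * Y k i)"
    unfolding qtrace_def qmult_def by (simp add: sum_distrib_right)
  also have "\<dots> = (\<Sum>m\<in>F. \<Sum>i\<in>UNIV. \<Sum>k\<in>UNIV. D m i k * Y k i)"
    unfolding sum.cartesian_product
    by (rule sum.reindex_bij_witness[where i="\<lambda>(m, i, k). (i, k, m)" and j="\<lambda>(i, k, m). (m, i, k)"]) auto
  finally show ?thesis unfolding qtrace_def qmult_def .
qed

lemma qmult_qid: "qmult qid X = (X :: ('a::finite) qop)"
  unfolding qmult_def qid_def by (simp add: if_distrib if_distribR cong: if_cong)

lemma qtrace_qtensor: "qtrace (qtensor X Y) = qtrace X * qtrace Y"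
  unfolding qtrace_def qtensor_def sum_UNIV_prod by (simp add: sum_product)

lemma qtrace_ketbra:
  assumes "unit_vec v"
  shows "qtrace (ketbra v) = 1"
proof -
  have "qtrace (ketbra v) = of_real (\<Sum>i\<in>UNIV. (cmod (v i))\<^sup>2)"
    unfolding qtrace_def ketbra_def by (simp only: of_real_sum complex_norm_square)
  then show ?thesis using assms unfolding unit_vec_def by simp
qed

section \<open>Cholesky factorisation and polar decomposition\<close>

lemma psd_on_schur_complement:
  assumes fin: "finite S" and p: "p \<in> S" and psd: "psd_on S X" and nz: "X p p \<noteq> 0"
  defines "c \<equiv> complex_of_real (sqrt (Re (X p p)))"
  shows "psd_on (S - {p}) (\<lambda>i j. X i j - (X i p / c) * cnj (X j p / c))"
  unfolding psd_on_iff_qform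
proof
  fix v
  define S' where "S' = S - {p}"
  define d where "d = X p p"
  have herm: "\<And>i j. i \<in> S \<Longrightarrow> j \<in> S \<Longrightarrow> X i j = cnj (X j i)"
    by (rule psd_on_hermitian[OF fin psd])
  have dpos: "Re d > 0"
    using psd_on_diag[OF fin psd p] nz unfolding d_def by (auto simp: complex_eq_iff)
  have dreal: "d = of_real (Re d)"
    using psd_on_diag(1)[OF fin psd p] unfolding d_def by (simp add: complex_eq_iff)
  have cc: "c * c = d" unfolding c_def d_def[symmetric] using dpos
    by (subst dreal) (simp flip: of_real_mult)
  have c0: "c \<noteq> 0" and d0: "d \<noteq> 0" and cd: "cnj d = d"
    using dpos dreal unfolding c_def d_def[symmetric] by (auto simp: complex_eq_iff)
  have c_real: "cnj c = c" unfolding c_def by simp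
  define b where "b = (\<Sum>j\<in>S'. X p j * v j)"
  have herm_p: "X i p = cnj (X p i)" if "i \<in> S'" for i
    by (rule herm) (use that p in \<open>auto simp: S'_def\<close>)
  have b_cnj: "(\<Sum>i\<in>S'. cnj (v i) * X i p) = cnj b"
    unfolding b_def cnj_sum by (rule sum.cong) (simp_all add: herm_p)
  \<comment> \<open>Completing the square: extend v by - b / d at p.\<close>
  define w where "w i = (if i = p then - b / d else v i)" for i
  have S: "S = insert p S'" "p \<notin> S'" "finite S'" using p fin by (auto simp: S'_def)
  have w_S': "\<And>i. i \<in> S' \<Longrightarrow> w i = v i" unfolding w_def using S by auto
  have "qform S X w = cnj (w p) * d * w p + (\<Sum>j\<in>S'. cnj (w p) * X p j * w j)
      + ((\<Sum>i\<in>S'. cnj (w i) * X i p * w p) + qform S' X w)"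
    unfolding qform_def d_def S(1) using S(2,3) by (simp add: sum.distrib)
  also have "(\<Sum>j\<in>S'. cnj (w p) * X p j * w j) = cnj (w p) * b"
    unfolding b_def sum_distrib_left using w_S' by (auto intro!: sum.cong simp: mult_ac)
  also have "(\<Sum>i\<in>S'. cnj (w i) * X i p * w p) = cnj b * w p"
    unfolding b_cnj[symmetric] sum_distrib_right using w_S' by (auto intro!: sum.cong simp: mult_ac)
  also have "qform S' X w = qform S' X v"
    unfolding qform_def using w_S' by (auto intro!: sum.cong)
  finally have "qform S X w = qform S' X v - cnj b * b / d"
    using d0 cd by (simp add: w_def[of p] field_simps)
  moreover have "qform S' (\<lambda>i j. X i j - (X i p / c) * cnj (X j p / c)) v = qform S' X v - cnj b * b / d"
  proof -
    have "(\<Sum>j\<in>S'. cnj (X j p) * v j) = b"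
      unfolding b_def by (rule sum.cong) (simp_all add: herm_p)
    then have "qform S' (\<lambda>i j. (X i p / c) * cnj (X j p / c)) v
        = (\<Sum>i\<in>S'. cnj (v i) * X i p) * (\<Sum>j\<in>S'. cnj (X j p) * v j) / (c * c)"
      unfolding qform_def sum_product sum_divide_distrib by (intro sum.cong refl) (simp add: c_real field_simps)
    also have "\<dots> = cnj b * b / d" using b_cnj \<open>(\<Sum>j\<in>S'. cnj (X j p) * v j) = b\<close> cc by simp
    finally show ?thesis by (simp add: qform_diff)
  qed
  ultimately show "Im (qform (S - {p}) (\<lambda>i j. X i j - (X i p / c) * cnj (X j p / c)) v) = 0 \<and>
      Re (qform (S - {p}) (\<lambda>i j. X i j - (X i p / c) * cnj (X j p / c)) v) \<ge> 0"
    using psd unfolding psd_on_iff_qform S'_def by metis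
qed

lemma psd_on_split_pivot:
  assumes fin: "finite S" and p: "p \<in> S" and psd: "psd_on S X"
  shows "\<exists>r. (\<forall>i\<in>S. \<forall>j\<in>S. i = p \<or> j = p \<longrightarrow> X i j = r i * cnj (r j))
    \<and> psd_on (S - {p}) (\<lambda>i j. X i j - r i * cnj (r j))"
proof (cases "X p p = 0")
  case True
  have "X i j = 0" if "i \<in> S" "j \<in> S" "i = p \<or> j = p" for i j
    using that psd_on_zero_diag_row[OF fin psd p, of i] psd_on_zero_diag_row[OF fin psd p, of j]
      psd_on_hermitian[OF fin psd, of i j] True by auto
  then show ?thesis
    by (intro exI[of _ "\<lambda>_. 0"]) (simp add: psd_on_subset[OF fin _ psd])
next
  case False
  define c where "c = complex_of_real (sqrt (Re (X p p)))"
  have cc: "c * c = X p p"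
    using psd_on_diag[OF fin psd p] unfolding c_def
    by (simp flip: of_real_mult add: complex_eq_iff)
  then have c0: "c \<noteq> 0" using False by auto
  have "X i j = X i p / c * cnj (X j p / c)" if "i \<in> S" "j \<in> S" "i = p \<or> j = p" for i j
  proof -
    have "cnj c = c" unfolding c_def by simp
    moreover have "X i j = cnj (X j i)" by (rule psd_on_hermitian[OF fin psd that(1,2)])
    moreover have "cnj (X p p) = X p p" using psd_on_diag(1)[OF fin psd p] by (simp add: complex_eq_iff)
    ultimately show ?thesis using that(3) cc c0 by (auto simp: field_simps)
  qed
  then show ?thesis
    using psd_on_schur_complement[OF fin p psd False] unfolding c_def[symmetric]
    by (intro exI[of _ "\<lambda>i. X i p / c"]) simp
qed

text \<open>Cholesky elimination, taking the pivots in P first.\<close>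

lemma psd_on_gram_factorization:
  assumes "finite S" "P \<subseteq> S" "psd_on S X"
  shows "\<exists>u. (\<forall>i\<in>S. \<forall>j\<in>S. X i j = (\<Sum>k\<in>S. u k i * cnj (u k j))) \<and> (\<forall>k\<in>S-P. \<forall>i\<in>P. u k i = 0)"
  using assms
proof (induction "card S" arbitrary: S P X)
  case 0
  then show ?case by auto
next
  case (Suc n)
  then have "S \<noteq> {}" by auto
  then obtain p where p: "p \<in> S" and pP: "P \<noteq> {} \<Longrightarrow> p \<in> P"
    using Suc.prems(2) by (cases "P = {}") auto
  obtain r where r: "\<forall>i\<in>S. \<forall>j\<in>S. i = p \<or> j = p \<longrightarrow> X i j = r i * cnj (r j)"
    and psd': "psd_on (S - {p}) (\<lambda>i j. X i j - r i * cnj (r j))"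
    using psd_on_split_pivot[OF Suc.prems(1) p Suc.prems(3)] by blast
  have "\<exists>u'. (\<forall>i\<in>S-{p}. \<forall>j\<in>S-{p}. X i j - r i * cnj (r j) = (\<Sum>k\<in>S-{p}. u' k i * cnj (u' k j)))
      \<and> (\<forall>k\<in>(S-{p})-(P-{p}). \<forall>i\<in>P-{p}. u' k i = 0)"
    by (rule Suc.hyps(1)) (use Suc.hyps(2) Suc.prems p psd' in auto)
  then obtain u' where u'1: "\<forall>i\<in>S-{p}. \<forall>j\<in>S-{p}. X i j - r i * cnj (r j) = (\<Sum>k\<in>S-{p}. u' k i * cnj (u' k j))"
    and u'2: "\<forall>k\<in>(S-{p})-(P-{p}). \<forall>i\<in>P-{p}. u' k i = 0"
    by blast
  define u where "u k = (if k = p then r else (\<lambda>i. if i = p then 0 else u' k i))" for k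
  have u_gram: "(\<Sum>k\<in>S. u k i * cnj (u k j)) = r i * cnj (r j) +
      (\<Sum>k\<in>S-{p}. (if i = p then 0 else u' k i) * cnj (if j = p then 0 else u' k j))" for i j
    using Suc.prems(1) p by (simp add: sum.remove u_def[of p]) (simp add: u_def)
  have "X i j = (\<Sum>k\<in>S. u k i * cnj (u k j))" if "i \<in> S" "j \<in> S" for i j
    unfolding u_gram using r u'1 that by (cases "i = p"; cases "j = p") (auto simp: algebra_simps)
  then have "\<forall>i\<in>S. \<forall>j\<in>S. X i j = (\<Sum>k\<in>S. u k i * cnj (u k j))" by blast
  moreover have "\<forall>k\<in>S-P. \<forall>i\<in>P. u k i = 0"
    using u'2 pP by (auto simp: u_def)
  ultimately show ?case by blast
qed

definition contraction_on :: "'b set \<Rightarrow> 'y set \<Rightarrow> ('b \<Rightarrow> 'y \<Rightarrow> complex) \<Rightarrow> bool" where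
  "contraction_on B Y G \<longleftrightarrow>
     (\<forall>v. (\<Sum>y\<in>Y. (cmod (\<Sum>b\<in>B. G b y * v b))\<^sup>2) \<le> (\<Sum>b\<in>B. (cmod (v b))\<^sup>2))"

lemma contraction_on_transpose:
  fixes G :: "'b \<Rightarrow> 'y \<Rightarrow> complex"
  assumes "contraction_on B Y G"
  shows "contraction_on Y B (\<lambda>y b. G b y)"
  unfolding contraction_on_def
proof
  fix z :: "'y \<Rightarrow> complex"
  define h where "h b = (\<Sum>y\<in>Y. G b y * z y)" for b
  define c where "c y = (\<Sum>b\<in>B. G b y * cnj (h b))" for y
  define n where "n = (\<Sum>b\<in>B. (cmod (h b))\<^sup>2)"
  define nz where "nz = (\<Sum>y\<in>Y. (cmod (z y))\<^sup>2)"
  \<comment> \<open>n = <z, G conj h> by Fubini, so Cauchy-Schwarz and the contraction property give n^2 \<le> nz * n.\<close>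
  have "of_real n = (\<Sum>b\<in>B. \<Sum>y\<in>Y. z y * (G b y * cnj (h b)))"
    unfolding n_def of_real_sum complex_norm_square h_def by (simp add: sum_distrib_right mult_ac)
  also have "\<dots> = (\<Sum>y\<in>Y. z y * c y)"
    unfolding c_def sum_distrib_left by (rule sum.swap)
  finally have n_eq: "of_real n = (\<Sum>y\<in>Y. z y * c y)" .
  have n_nonneg: "n \<ge> 0" unfolding n_def by (simp add: sum_nonneg)
  have "n = cmod (\<Sum>y\<in>Y. z y * c y)" using n_nonneg by (simp flip: n_eq)
  also have "\<dots> \<le> (\<Sum>y\<in>Y. cmod (z y) * cmod (c y))"
    by (rule order_trans[OF norm_sum]) (simp add: norm_mult)
  finally have "n\<^sup>2 \<le> (\<Sum>y\<in>Y. cmod (z y) * cmod (c y))\<^sup>2"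
    using n_nonneg by (simp add: power_mono)
  also have "\<dots> \<le> nz * (\<Sum>y\<in>Y. (cmod (c y))\<^sup>2)"
    unfolding nz_def by (rule Cauchy_Schwarz_ineq_sum)
  also have "\<dots> \<le> nz * n"
    using assms[unfolded contraction_on_def, rule_format, of "\<lambda>b. cnj (h b)"]
    unfolding c_def n_def nz_def by (simp add: mult_left_mono sum_nonneg)
  finally have "n \<le> nz"
    using n_nonneg by (cases "n = 0") (auto simp: power2_eq_square nz_def sum_nonneg)
  then show "(\<Sum>b\<in>B. (cmod (\<Sum>y\<in>Y. G b y * z y))\<^sup>2) \<le> (\<Sum>y\<in>Y. (cmod (z y))\<^sup>2)"
    unfolding n_def nz_def h_def .
qed

text \<open>A polar decomposition W = L G, read off a Cholesky factorisation of the Gram matrix of the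
  stacked matrix [W; I] that eliminates the rows of W first.\<close>

lemma factor_through_contraction:
  fixes W :: "'a::finite \<Rightarrow> 'y \<Rightarrow> complex"
  assumes finY: "finite Y"
  shows "\<exists>L :: 'a qop. \<exists>G. (\<forall>a. \<forall>y\<in>Y. W a y = (\<Sum>b\<in>UNIV. L a b * G b y))
    \<and> contraction_on UNIV Y G
    \<and> (\<forall>a. (\<Sum>b\<in>UNIV. (cmod (L a b))\<^sup>2) = (\<Sum>y\<in>Y. (cmod (W a y))\<^sup>2))"
proof -
  define F where "F i y = (case i of Inl a \<Rightarrow> W a y | Inr y' \<Rightarrow> (if y' = y then 1 else 0))"
    for i :: "'a + 'y" and y
  define Z where "Z i j = (\<Sum>y\<in>Y. F i y * cnj (F j y))" for i j
  define SZ where "SZ = (UNIV :: 'a set) <+> Y"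
  have finSZ: "finite SZ" unfolding SZ_def using finY by simp
  obtain u where u: "\<forall>i\<in>SZ. \<forall>j\<in>SZ. Z i j = (\<Sum>k\<in>SZ. u k i * cnj (u k j))"
    and u_triangular: "\<forall>k\<in>SZ - Inl ` UNIV. \<forall>i\<in>Inl ` UNIV. u k i = 0"
    using psd_on_gram_factorization[OF finSZ _ psd_on_gram[where S=SZ and K=Y and f="\<lambda>y i. F i y", folded Z_def], of "Inl ` UNIV"]
    unfolding SZ_def by blast
  define L where "L a b = u (Inl b) (Inl a)" for a b
  define G where "G b y = cnj (u (Inl b) (Inr y))" for b y
  have sum_SZ: "(\<Sum>k\<in>SZ. f k) = (\<Sum>b\<in>UNIV. f (Inl b)) + (\<Sum>y\<in>Y. f (Inr y))" for f :: "_ \<Rightarrow> real"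
    unfolding SZ_def using finY by (simp add: sum.Plus)
  have u_Inr_Inl: "u (Inr y) (Inl a) = 0" if "y \<in> Y" for y a
    using u_triangular that unfolding SZ_def by auto
  have Z_Inl: "Z (Inl a) j = (\<Sum>b\<in>UNIV. u (Inl b) (Inl a) * cnj (u (Inl b) j))" if "j \<in> SZ" for a j
    using u[rule_format, of "Inl a" j] that finY unfolding SZ_def by (simp add: InlI sum.Plus u_Inr_Inl)
  have Z_Inr: "Z i (Inr y) = F i y" if "y \<in> Y" for i y
    unfolding Z_def F_def using that finY by (simp add: if_distrib if_distribR cong: if_cong)
  have "W a y = (\<Sum>b\<in>UNIV. L a b * G b y)" if "y \<in> Y" for a y
    using Z_Inl[of "Inr y" a] Z_Inr[OF that, of "Inl a"] that unfolding SZ_def L_def G_def F_def by (simp add: InrI)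
  moreover have "(\<Sum>b\<in>UNIV. (cmod (L a b))\<^sup>2) = (\<Sum>y\<in>Y. (cmod (W a y))\<^sup>2)" for a
  proof -
    have "of_real (\<Sum>b\<in>UNIV. (cmod (L a b))\<^sup>2) = Z (Inl a) (Inl a)"
      using Z_Inl[of "Inl a" a] unfolding SZ_def L_def by (simp only: of_real_sum complex_norm_square) (simp add: InlI)
    also have "\<dots> = of_real (\<Sum>y\<in>Y. (cmod (W a y))\<^sup>2)"
      unfolding Z_def F_def by (simp only: of_real_sum complex_norm_square) simp
    finally show ?thesis by (simp only: of_real_eq_iff)
  qed
  moreover have "contraction_on Y UNIV (\<lambda>y b. G b y)"
    unfolding contraction_on_def
  proof
    fix z :: "'y \<Rightarrow> complex"
    \<comment> \<open>The Inr-Inr block of Z is the identity; the Inl factors are among the Cholesky factors.\<close>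
    have "of_real (\<Sum>y\<in>Y. (cmod (z y))\<^sup>2) = (\<Sum>y\<in>Y. z y * cnj (z y))"
      by (simp only: of_real_sum complex_norm_square)
    also have "\<dots> = qform Y (\<lambda>y y'. Z (Inr y) (Inr y')) z"
      unfolding qform_def using finY
      by (simp add: Z_Inr F_def if_distrib if_distribR mult.commute cong: if_cong)
    also have "\<dots> = qform Y (\<lambda>y y'. \<Sum>k\<in>SZ. u k (Inr y) * cnj (u k (Inr y'))) z"
      by (rule qform_cong) (simp add: u[rule_format] SZ_def InrI)
    also have "\<dots> = of_real (\<Sum>k\<in>SZ. (cmod (\<Sum>y\<in>Y. cnj (z y) * u k (Inr y)))\<^sup>2)"
      unfolding qform_gram of_real_sum ..
    finally have "(\<Sum>y\<in>Y. (cmod (z y))\<^sup>2) = (\<Sum>k\<in>SZ. (cmod (\<Sum>y\<in>Y. cnj (z y) * u k (Inr y)))\<^sup>2)"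
      by (simp only: of_real_eq_iff)
    also have "\<dots> \<ge> (\<Sum>b\<in>UNIV. (cmod (\<Sum>y\<in>Y. cnj (z y) * u (Inl b) (Inr y)))\<^sup>2)"
      unfolding sum_SZ by (simp add: sum_nonneg)
    also have "(\<Sum>b\<in>UNIV. (cmod (\<Sum>y\<in>Y. cnj (z y) * u (Inl b) (Inr y)))\<^sup>2)
        = (\<Sum>b\<in>UNIV. (cmod (\<Sum>y\<in>Y. G b y * z y))\<^sup>2)"
    proof (rule sum.cong[OF refl])
      fix b
      have "(\<Sum>y\<in>Y. G b y * z y) = cnj (\<Sum>y\<in>Y. cnj (z y) * u (Inl b) (Inr y))"
        unfolding G_def cnj_sum by (simp add: mult.commute)
      then show "(cmod (\<Sum>y\<in>Y. cnj (z y) * u (Inl b) (Inr y)))\<^sup>2 = (cmod (\<Sum>y\<in>Y. G b y * z y))\<^sup>2"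
        by (simp only: complex_mod_cnj)
    qed
    finally show "(\<Sum>b\<in>UNIV. (cmod (\<Sum>y\<in>Y. G b y * z y))\<^sup>2) \<le> (\<Sum>y\<in>Y. (cmod (z y))\<^sup>2)" .
  qed
  ultimately show ?thesis
    using contraction_on_transpose[of Y UNIV "\<lambda>y b. G b y"] by blast
qed

text \<open>For the vector \<psi> on A \<otimes> A' with coefficient matrix L and the map V : A' \<rightarrow> X \<otimes> K with
  matrix G, this is the operator Tr_K[(I \<otimes> V) |\<psi>\<rangle>\<langle>\<psi>| (I \<otimes> V)\<dagger>] on A \<otimes> X.\<close>

definition contracted_purification ::
    "('a::finite) qop \<Rightarrow> ('a \<Rightarrow> 'x \<times> 'k \<Rightarrow> complex) \<Rightarrow> 'k set \<Rightarrow> ('a \<times> 'x) qop" where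
  "contracted_purification L G K = (\<lambda>(a, x) (b, x').
     \<Sum>k\<in>K. (\<Sum>a'\<in>UNIV. L a a' * G a' (x, k)) * cnj (\<Sum>b'\<in>UNIV. L b b' * G b' (x', k)))"

lemma psd_on_purification:
  fixes \<omega> :: "('a::finite \<times> 'x) qop"
  assumes finX: "finite X" and psd: "psd_on (UNIV \<times> X) \<omega>"
  shows "\<exists>L :: 'a qop. \<exists>G :: 'a \<Rightarrow> 'x \<times> ('a \<times> 'x) \<Rightarrow> complex.
    (\<forall>p\<in>UNIV \<times> X. \<forall>q\<in>UNIV \<times> X. \<omega> p q = contracted_purification L G (UNIV \<times> X) p q)
    \<and> contraction_on UNIV (X \<times> (UNIV \<times> X)) G
    \<and> (\<Sum>a\<in>UNIV. \<Sum>a'\<in>UNIV. (cmod (L a a'))\<^sup>2) = Re (\<Sum>a\<in>UNIV. \<Sum>x\<in>X. \<omega> (a, x) (a, x))"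
proof -
  define S where "S = (UNIV :: 'a set) \<times> X"
  have finS: "finite S" unfolding S_def using finX by simp
  obtain w where w: "\<forall>i\<in>S. \<forall>j\<in>S. \<omega> i j = (\<Sum>k\<in>S. w k i * cnj (w k j))"
    using psd_on_gram_factorization[OF finS _ psd[folded S_def], of "{}"] by blast
  obtain L :: "'a qop" and G where
    LG: "\<forall>a. \<forall>y\<in>X \<times> S. w (snd y) (a, fst y) = (\<Sum>b\<in>UNIV. L a b * G b y)"
    and G: "contraction_on UNIV (X \<times> S) G"
    and L: "\<forall>a. (\<Sum>b\<in>UNIV. (cmod (L a b))\<^sup>2) = (\<Sum>y\<in>X \<times> S. (cmod (w (snd y) (a, fst y)))\<^sup>2)"
    using factor_through_contraction[OF finite_cartesian_product[OF finX finS],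
        of "\<lambda>a y. w (snd y) (a, fst y)"] by blast
  have w_LG: "w k (a, x) = (\<Sum>b\<in>UNIV. L a b * G b (x, k))" if "x \<in> X" "k \<in> S" for a x k
    using LG that by auto
  have "\<omega> (a, x) (b, x') = contracted_purification L G S (a, x) (b, x')"
    if "x \<in> X" "x' \<in> X" for a b x x'
  proof -
    have "(a, x) \<in> S" "(b, x') \<in> S" using that unfolding S_def by auto
    then show ?thesis
      unfolding w[rule_format, OF \<open>(a, x) \<in> S\<close> \<open>(b, x') \<in> S\<close>] contracted_purification_def
      using that by (simp add: w_LG)
  qed
  moreover have "(\<Sum>a\<in>UNIV. \<Sum>a'\<in>UNIV. (cmod (L a a'))\<^sup>2) = Re (\<Sum>a\<in>UNIV. \<Sum>x\<in>X. \<omega> (a, x) (a, x))"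
  proof -
    have "\<omega> (a, x) (a, x) = of_real (\<Sum>k\<in>S. (cmod (w k (a, x)))\<^sup>2)" if "x \<in> X" for a x
      using w[rule_format, of "(a, x)" "(a, x)"] that unfolding S_def by (simp only: of_real_sum complex_norm_square) simp
    then show ?thesis
      unfolding L[rule_format] by (simp add: Re_sum sum.cartesian_product')
  qed
  ultimately show ?thesis using G unfolding S_def by blast
qed

section \<open>Channels\<close>

lemma qlinear_add: "qlinear N \<Longrightarrow> N (\<lambda>i j. X i j + Y i j) = (\<lambda>i j. N X i j + N Y i j)"
  unfolding qlinear_def by blast

lemma qlinear_scale: "qlinear N \<Longrightarrow> N (\<lambda>i j. c * X i j) = (\<lambda>i j. c * N X i j)"
  unfolding qlinear_def by blast

lemma qlinear_zero: "qlinear N \<Longrightarrow> N (\<lambda>i j. 0) = (\<lambda>i j. 0)"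
  using qlinear_scale[of N 0 "\<lambda>i j. 0"] by simp

lemma qlinear_divide: "qlinear N \<Longrightarrow> N (\<lambda>i j. X i j / c) = (\<lambda>i j. N X i j / c)"
  using qlinear_scale[of N "inverse c" X] by (simp add: divide_inverse mult.commute)

lemma qlinear_sum:
  assumes "qlinear N" "finite F"
  shows "N (\<lambda>i j. \<Sum>k\<in>F. c k * X k i j) = (\<lambda>i j. \<Sum>k\<in>F. c k * N (X k) i j)"
  using assms(2)
proof (induction F)
  case empty
  then show ?case using qlinear_zero[OF assms(1)] by simp
next
  case (insert x F)
  then show ?case
    using qlinear_add[OF assms(1), of "\<lambda>i j. c x * X x i j" "\<lambda>i j. \<Sum>k\<in>F. c k * X k i j"]
      qlinear_scale[OF assms(1), of "c x" "X x"] by simp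
qed

lemma ptrace1_apply_first:
  assumes "channel N"
  shows "ptrace1 (apply_first N X) = ptrace1 X"
  using assms unfolding channel_def ptrace1_def apply_first_def qtrace_def by simp

lemma qtrace_ptrace1: "qtrace (ptrace1 X) = qtrace X"
  unfolding qtrace_def ptrace1_def sum_UNIV_prod by (rule sum.swap)

lemma qtrace_apply_first:
  assumes "channel N"
  shows "qtrace (apply_first N X) = qtrace X"
proof -
  have "qtrace (apply_first N X) = qtrace (ptrace1 (apply_first N X))" by (rule qtrace_ptrace1[symmetric])
  also have "\<dots> = qtrace X" unfolding ptrace1_apply_first[OF assms] by (rule qtrace_ptrace1)
  finally show ?thesis .
qed

lemma bij_betw_swap_reindex:
  assumes "bij_betw h UNIV I"
  shows "bij_betw (\<lambda>(a, c). (h c, a)) UNIV (I \<times> UNIV)"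
proof -
  have "bij_betw (\<lambda>(c, a). (h c, a)) (UNIV \<times> UNIV) (I \<times> UNIV)"
    using bij_betw_map_prod[OF assms bij_betw_id[of UNIV]] by (simp add: map_prod_def id_def)
  moreover have "bij_betw (\<lambda>(a, c). (c, a)) UNIV (UNIV \<times> UNIV)"
    by (rule bij_betwI[where g="\<lambda>(c, a). (a, c)"]) auto
  ultimately have "bij_betw ((\<lambda>(c, a). (h c, a)) \<circ> (\<lambda>(a, c). (c, a))) UNIV (I \<times> UNIV)"
    by (rule bij_betw_trans[rotated])
  then show ?thesis by (simp add: comp_def case_prod_unfold)
qed

text \<open>Complete positivity is stated with ancillas indexed by an initial segment of nat, so the
  ancilla type is enumerated first.\<close>

lemma psd_apply_first:
  fixes N :: "('a::finite) qop \<Rightarrow> ('b::finite) qop" and X :: "('a \<times> 'c::finite) qop"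
  assumes cp: "completely_positive N" and psd: "psd X"
  shows "psd (apply_first N X)"
proof -
  define n where "n = card (UNIV :: 'c set)"
  obtain h :: "'c \<Rightarrow> nat" where h: "bij_betw h UNIV {..<n}"
    using ex_bij_betw_finite_nat[of "UNIV :: 'c set"] unfolding n_def atLeast0LessThan by auto
  define g where "g = inv_into UNIV h"
  have gh: "g (h c) = c" for c unfolding g_def using h by (simp add: bij_betw_def)
  define Y where "Y = (\<lambda>(i, a) (j, a'). X (a, g i) (a', g j))"
  have "psd_on ({..<n} \<times> UNIV) Y"
    unfolding psd_on_iff_qform
  proof
    fix v
    have "qform ({..<n} \<times> UNIV) Y v = qform UNIV X (\<lambda>(a, c). v (h c, a))"
      by (subst qform_reindex[OF bij_betw_swap_reindex[OF h]]) (simp add: Y_def gh case_prod_unfold)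
    then show "Im (qform ({..<n} \<times> UNIV) Y v) = 0 \<and> 0 \<le> Re (qform ({..<n} \<times> UNIV) Y v)"
      using psd unfolding psd_on_iff_qform by simp
  qed
  then have psd_out: "psd_on ({..<n} \<times> UNIV) (\<lambda>(i, b) (j, b'). N (\<lambda>a a'. Y (i, a) (j, a')) b b')"
    using cp unfolding completely_positive_def by blast
  show ?thesis
    unfolding psd_on_iff_qform
  proof
    fix w :: "'b \<times> 'c \<Rightarrow> complex"
    have "qform ({..<n} \<times> UNIV) (\<lambda>(i, b) (j, b'). N (\<lambda>a a'. Y (i, a) (j, a')) b b') (\<lambda>(i, b). w (b, g i))
        = qform UNIV (apply_first N X) w"
      by (subst qform_reindex[OF bij_betw_swap_reindex[OF h]])
        (simp add: Y_def apply_first_def gh case_prod_unfold)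
    then show "Im (qform UNIV (apply_first N X) w) = 0 \<and> 0 \<le> Re (qform UNIV (apply_first N X) w)"
      using psd_out unfolding psd_on_iff_qform by metis
  qed
qed

section \<open>Block-diagonal operators\<close>

definition block_diag :: "('m \<Rightarrow> ('x \<times> 'e) qop) \<Rightarrow> ('x \<times> ('m \<times> 'e)) qop" where
  "block_diag D = (\<lambda>(a, (m, e)) (a', (m', e')). if m = m' then D m (a, e) (a', e') else 0)"

definition trace_pair_on :: "'s set \<Rightarrow> 's qop \<Rightarrow> 's qop \<Rightarrow> complex" where
  "trace_pair_on S X Y = (\<Sum>i\<in>S. \<Sum>j\<in>S. X i j * Y j i)"

lemma qtrace_qmult: "qtrace (qmult X Y) = trace_pair_on UNIV X Y"
  unfolding qtrace_def qmult_def trace_pair_on_def ..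

lemma trace_pair_on_cong:
  assumes "\<And>i j. i \<in> S \<Longrightarrow> j \<in> S \<Longrightarrow> Y i j = Y' i j"
  shows "trace_pair_on S X Y = trace_pair_on S X Y'"
  unfolding trace_pair_on_def using assms by (auto intro!: sum.cong)

lemma trace_pair_on_apply_first_cong:
  assumes "\<forall>p\<in>UNIV \<times> X. \<forall>q\<in>UNIV \<times> X. \<Omega> p q = \<Omega>' p q"
  shows "trace_pair_on (UNIV \<times> X) T (apply_first N \<Omega>) = trace_pair_on (UNIV \<times> X) T (apply_first N \<Omega>')"
  by (rule trace_pair_on_cong) (use assms in \<open>auto simp: apply_first_def\<close>)

lemma trace_pair_on_qtensor_ptrace1_cong:
  assumes "\<forall>p\<in>UNIV \<times> X. \<forall>q\<in>UNIV \<times> X. \<Omega> p q = \<Omega>' p q"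
  shows "trace_pair_on (UNIV \<times> X) T (qtensor \<sigma> (ptrace1 \<Omega>))
    = trace_pair_on (UNIV \<times> X) T (qtensor \<sigma> (ptrace1 \<Omega>'))"
  by (rule trace_pair_on_cong) (use assms in \<open>auto simp: qtensor_def ptrace1_def\<close>)

lemma qform_block_diag:
  fixes D :: "'m \<Rightarrow> (('x::finite) \<times> ('e::finite)) qop"
  assumes "finite F"
  shows "qform (UNIV \<times> (F \<times> UNIV)) (block_diag D) v = (\<Sum>m\<in>F. qform UNIV (D m) (\<lambda>(a, e). v (a, (m, e))))"
proof -
  have "qform (UNIV \<times> (F \<times> UNIV)) (block_diag D) v = (\<Sum>m\<in>F. \<Sum>a\<in>UNIV. \<Sum>e\<in>UNIV. \<Sum>a'\<in>UNIV. \<Sum>e'\<in>UNIV.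
      \<Sum>m'\<in>F. cnj (v (a, (m, e))) * block_diag D (a, (m, e)) (a', (m', e')) * v (a', (m', e')))"
    unfolding qform_def sum.cartesian_product
    by (rule sum.reindex_bij_witness[where i="\<lambda>(m, a, e, a', e', m'). ((a, m, e), (a', m', e'))"
          and j="\<lambda>((a, m, e), (a', m', e')). (m, a, e, a', e', m')"]) auto
  also have "\<dots> = (\<Sum>m\<in>F. qform UNIV (D m) (\<lambda>(a, e). v (a, (m, e))))"
    unfolding qform_def sum_UNIV_prod block_diag_def using assms
    by (simp add: if_distrib if_distribR cong: if_cong)
  finally show ?thesis .
qed

lemma trace_pair_on_block_diag:
  fixes D E :: "'m \<Rightarrow> (('x::finite) \<times> ('e::finite)) qop"
  assumes "finite F"
  shows "trace_pair_on (UNIV \<times> (F \<times> UNIV)) (block_diag D) (block_diag E) = (\<Sum>m\<in>F. qtrace (qmult (D m) (E m)))"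
proof -
  have "trace_pair_on (UNIV \<times> (F \<times> UNIV)) (block_diag D) (block_diag E) = (\<Sum>m\<in>F. \<Sum>a\<in>UNIV. \<Sum>e\<in>UNIV. \<Sum>a'\<in>UNIV. \<Sum>e'\<in>UNIV.
      \<Sum>m'\<in>F. block_diag D (a, (m, e)) (a', (m', e')) * block_diag E (a', (m', e')) (a, (m, e)))"
    unfolding trace_pair_on_def sum.cartesian_product
    by (rule sum.reindex_bij_witness[where i="\<lambda>(m, a, e, a', e', m'). ((a, m, e), (a', m', e'))"
          and j="\<lambda>((a, m, e), (a', m', e')). (m, a, e, a', e', m')"]) auto
  also have "\<dots> = (\<Sum>m\<in>F. qtrace (qmult (D m) (E m)))"
    unfolding qtrace_qmult trace_pair_on_def sum_UNIV_prod block_diag_def using assms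
    by (simp add: if_distrib if_distribR cong: if_cong)
  finally show ?thesis .
qed

lemma psd_on_block_diag:
  fixes D :: "'m \<Rightarrow> (('x::finite) \<times> ('e::finite)) qop"
  assumes "finite F" "\<And>m. m \<in> F \<Longrightarrow> psd (D m)"
  shows "psd_on (UNIV \<times> (F \<times> UNIV)) (block_diag D)"
  using assms unfolding psd_on_iff_qform qform_block_diag[OF assms(1)]
  by (auto simp: Re_sum Im_sum intro!: sum_nonneg sum.neutral)

lemma povm_le_id:
  assumes "povm K D" "m \<in> {1..K}"
  shows "Re (qform UNIV (D m) w) \<le> (\<Sum>i\<in>UNIV. (cmod (w i))\<^sup>2)"
proof -
  have psd: "Im (qform UNIV (D m') w) = 0 \<and> Re (qform UNIV (D m') w) \<ge> 0" if "m' \<in> {1..K}" for m'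
    using assms(1) that unfolding povm_def psd_on_iff_qform by blast
  have "Re (qform UNIV (D m) w) \<le> (\<Sum>m'\<in>{1..K}. Re (qform UNIV (D m') w))"
    by (rule member_le_sum) (use psd assms(2) in auto)
  also have "\<dots> = Re (qform UNIV (\<lambda>i j. \<Sum>m'\<in>{1..K}. D m' i j) w)"
    by (simp add: qform_sum Re_sum)
  also have "(\<lambda>i j. \<Sum>m'\<in>{1..K}. D m' i j) = qid"
    using assms(1) unfolding povm_def by blast
  finally show ?thesis by (simp add: qform_qid)
qed

lemma block_diag_povm_le_id:
  fixes D :: "nat \<Rightarrow> (('x::finite) \<times> ('e::finite)) qop"
  assumes "povm K D"
  shows "Re (qform (UNIV \<times> ({1..K} \<times> UNIV)) (block_diag D) v) \<le> (\<Sum>i\<in>UNIV \<times> ({1..K} \<times> UNIV). (cmod (v i))\<^sup>2)"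
proof -
  have "Re (qform (UNIV \<times> ({1..K} \<times> UNIV)) (block_diag D) v)
      \<le> (\<Sum>m\<in>{1..K}. \<Sum>i\<in>UNIV. (cmod ((\<lambda>(a, e). v (a, (m, e))) i))\<^sup>2)"
    unfolding qform_block_diag[OF finite_atLeastAtMost] Re_sum
    by (rule sum_mono) (rule povm_le_id[OF assms])
  also have "\<dots> = (\<Sum>i\<in>UNIV \<times> ({1..K} \<times> UNIV). (cmod (v i))\<^sup>2)"
    unfolding sum_UNIV_prod sum.cartesian_product' prod.case by (rule sum.swap)
  finally show ?thesis .
qed

lemma apply_first_block_diag:
  assumes "qlinear N"
  shows "apply_first N (block_diag D) = block_diag (\<lambda>m. apply_first N (D m))"
  using qlinear_zero[OF assms] unfolding apply_first_def block_diag_def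
  by (auto simp: fun_eq_iff)

lemma apply_first_divide:
  assumes "qlinear N"
  shows "apply_first N (\<lambda>i j. X i j / c) = (\<lambda>i j. apply_first N X i j / c)"
  using qlinear_divide[OF assms] unfolding apply_first_def by (simp add: case_prod_unfold)

lemma qtensor_ptrace1_block_diag:
  "qtensor \<sigma> (ptrace1 (block_diag D)) = block_diag (\<lambda>m. qtensor \<sigma> (ptrace1 (D m)))"
  unfolding qtensor_def ptrace1_def block_diag_def by (auto simp: fun_eq_iff)

section \<open>Tests pulled back along a contraction\<close>

text \<open>For V : A' \<rightarrow> X \<otimes> K with matrix G, the test (I \<otimes> V)\<dagger> (T \<otimes> I_K) (I \<otimes> V) on B \<otimes> A'.\<close>

definition pullback_test ::
    "('a \<Rightarrow> 'x \<times> 'k \<Rightarrow> complex) \<Rightarrow> ('b \<times> 'x) qop \<Rightarrow> 'x set \<Rightarrow> 'k set \<Rightarrow> ('b \<times> 'a) qop" where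
  "pullback_test G T X K = (\<lambda>(\<beta>, b') (\<beta>', a').
     \<Sum>k\<in>K. \<Sum>x\<in>X. \<Sum>x'\<in>X. cnj (G b' (x, k)) * T (\<beta>, x) (\<beta>', x') * G a' (x', k))"

lemma qform_pullback_test:
  fixes T :: "(('b::finite) \<times> 'x) qop" and G :: "('a::finite) \<Rightarrow> 'x \<times> 'k \<Rightarrow> complex"
  shows "qform UNIV (pullback_test G T X K) v
    = (\<Sum>k\<in>K. qform (UNIV \<times> X) T (\<lambda>(\<beta>, x). \<Sum>a'\<in>UNIV. G a' (x, k) * v (\<beta>, a')))"
proof -
  have "qform UNIV (pullback_test G T X K) v
    = (\<Sum>\<beta>\<in>UNIV. \<Sum>b'\<in>UNIV. \<Sum>\<beta>'\<in>UNIV. \<Sum>a'\<in>UNIV. \<Sum>k\<in>K. \<Sum>x\<in>X. \<Sum>x'\<in>X.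
        cnj (v (\<beta>, b')) * cnj (G b' (x, k)) * T (\<beta>, x) (\<beta>', x') * G a' (x', k) * v (\<beta>', a'))"
    unfolding qform_def sum_UNIV_prod pullback_test_def
    by (simp add: sum_distrib_left sum_distrib_right mult_ac)
  also have "\<dots> = (\<Sum>k\<in>K. \<Sum>\<beta>\<in>UNIV. \<Sum>x\<in>X. \<Sum>\<beta>'\<in>UNIV. \<Sum>x'\<in>X. \<Sum>b'\<in>UNIV. \<Sum>a'\<in>UNIV.
        cnj (v (\<beta>, b')) * cnj (G b' (x, k)) * T (\<beta>, x) (\<beta>', x') * G a' (x', k) * v (\<beta>', a'))"
    unfolding sum.cartesian_product
    by (rule sum.reindex_bij_witness[where i="\<lambda>(k, \<beta>, x, \<beta>', x', b', a'). (\<beta>, b', \<beta>', a', k, x, x')"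
          and j="\<lambda>(\<beta>, b', \<beta>', a', k, x, x'). (k, \<beta>, x, \<beta>', x', b', a')"]) auto
  also have "\<dots> = (\<Sum>k\<in>K. qform (UNIV \<times> X) T (\<lambda>(\<beta>, x). \<Sum>a'\<in>UNIV. G a' (x, k) * v (\<beta>, a')))"
    unfolding qform_def sum.cartesian_product'
    by (simp add: sum_distrib_left sum_distrib_right cnj_sum mult_ac)
  finally show ?thesis .
qed

lemma psd_pullback_test:
  fixes T :: "(('b::finite) \<times> 'x) qop" and G :: "('a::finite) \<Rightarrow> 'x \<times> 'k \<Rightarrow> complex"
  assumes "psd_on (UNIV \<times> X) T"
  shows "psd (pullback_test G T X K)"
  using assms unfolding psd_on_iff_qform qform_pullback_test
  by (auto simp: Re_sum Im_sum intro!: sum_nonneg sum.neutral)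

lemma pullback_test_le_id:
  fixes T :: "(('b::finite) \<times> 'x) qop" and G :: "('a::finite) \<Rightarrow> 'x \<times> 'k \<Rightarrow> complex"
  assumes psd: "psd_on (UNIV \<times> X) T"
    and T_le: "\<And>h. Re (qform (UNIV \<times> X) T h) \<le> (\<Sum>i\<in>UNIV \<times> X. (cmod (h i))\<^sup>2)"
    and G: "contraction_on UNIV (X \<times> K) G"
  shows "psd (\<lambda>i j. qid i j - pullback_test G T X K i j)"
  unfolding psd_on_iff_qform qform_diff qform_qid
proof
  fix v :: "'b \<times> 'a \<Rightarrow> complex"
  define h where "h k = (\<lambda>(\<beta>, x). \<Sum>a'\<in>UNIV. G a' (x, k) * v (\<beta>, a'))" for k
  have "Im (qform UNIV (pullback_test G T X K) v) = 0"
    using psd unfolding qform_pullback_test psd_on_iff_qform by (auto simp: Im_sum intro!: sum.neutral)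
  moreover have "Re (qform UNIV (pullback_test G T X K) v) \<le> (\<Sum>k\<in>K. \<Sum>i\<in>UNIV \<times> X. (cmod (h k i))\<^sup>2)"
    unfolding qform_pullback_test Re_sum h_def[symmetric] by (rule sum_mono) (rule T_le)
  moreover have "\<dots> = (\<Sum>\<beta>\<in>UNIV. \<Sum>y\<in>X \<times> K. (cmod (\<Sum>a'\<in>UNIV. G a' y * v (\<beta>, a')))\<^sup>2)"
    unfolding h_def sum.cartesian_product
    by (rule sum.reindex_bij_witness[where i="\<lambda>(\<beta>, x, k). (k, \<beta>, x)" and j="\<lambda>(k, \<beta>, x). (\<beta>, x, k)"])
      auto
  moreover have "\<dots> \<le> (\<Sum>\<beta>\<in>UNIV. \<Sum>a'\<in>UNIV. (cmod (v (\<beta>, a')))\<^sup>2)"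
    by (rule sum_mono) (rule G[unfolded contraction_on_def, rule_format])
  ultimately show "Im (of_real (\<Sum>i\<in>UNIV. (cmod (v i))\<^sup>2) - qform UNIV (pullback_test G T X K) v) = 0 \<and>
      0 \<le> Re (of_real (\<Sum>i\<in>UNIV. (cmod (v i))\<^sup>2) - qform UNIV (pullback_test G T X K) v)"
    unfolding sum_UNIV_prod[of "\<lambda>i. (cmod (v i))\<^sup>2"] by simp
qed

lemma apply_first_contracted_purification:
  fixes L :: "('a::finite) qop" and G :: "'a \<Rightarrow> 'x \<times> 'k \<Rightarrow> complex"
  assumes "qlinear N" "finite K"
  shows "apply_first N (contracted_purification L G K) (\<beta>', x') (\<beta>, x) =
    (\<Sum>k\<in>K. \<Sum>a'\<in>UNIV. \<Sum>b'\<in>UNIV.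
       G a' (x', k) * cnj (G b' (x, k)) * N (\<lambda>a a2. L a a' * cnj (L a2 b')) \<beta>' \<beta>)"
proof -
  define c where "c = (\<lambda>(k, a', b'). G a' (x', k) * cnj (G b' (x, k)))"
  define E where "E = (\<lambda>(k::'k, a', b') a a2. L a a' * cnj (L a2 b'))"
  have "(\<lambda>a a2. contracted_purification L G K (a, x') (a2, x))
      = (\<lambda>a a2. \<Sum>t\<in>K \<times> UNIV \<times> UNIV. c t * E t a a2)"
    unfolding contracted_purification_def c_def E_def sum.cartesian_product'
    by (simp add: sum_product cnj_sum sum_UNIV_prod mult_ac)
  then show ?thesis
    unfolding apply_first_def using qlinear_sum[OF assms(1), of "K \<times> UNIV \<times> UNIV" c E] assms(2)
    by (simp add: sum.cartesian_product' sum_UNIV_prod c_def E_def)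
qed

lemma trace_pullback_test_apply_first:
  fixes T :: "(('b::finite) \<times> 'x) qop" and L :: "('a::finite) qop" and G :: "'a \<Rightarrow> 'x \<times> 'k \<Rightarrow> complex"
    and N :: "'a qop \<Rightarrow> 'b qop"
  assumes "qlinear N" "finite K"
  shows "qtrace (qmult (pullback_test G T X K) (apply_first N (ketbra (\<lambda>(a, a'). L a a'))))
    = trace_pair_on (UNIV \<times> X) T (apply_first N (contracted_purification L G K))"
proof -
  define E where "E a' b' = N (\<lambda>a a2. L a a' * cnj (L a2 b'))" for a' b'
  have "qtrace (qmult (pullback_test G T X K) (apply_first N (ketbra (\<lambda>(a, a'). L a a'))))
    = (\<Sum>\<beta>\<in>UNIV. \<Sum>b'\<in>UNIV. \<Sum>\<beta>'\<in>UNIV. \<Sum>a'\<in>UNIV. \<Sum>k\<in>K. \<Sum>x\<in>X. \<Sum>x'\<in>X.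
        cnj (G b' (x, k)) * T (\<beta>, x) (\<beta>', x') * G a' (x', k) * E a' b' \<beta>' \<beta>)"
    unfolding qtrace_def qmult_def sum_UNIV_prod E_def
    by (simp add: pullback_test_def apply_first_def ketbra_def sum_distrib_right)
  also have "\<dots> = (\<Sum>\<beta>\<in>UNIV. \<Sum>x\<in>X. \<Sum>\<beta>'\<in>UNIV. \<Sum>x'\<in>X. \<Sum>k\<in>K. \<Sum>a'\<in>UNIV. \<Sum>b'\<in>UNIV.
        cnj (G b' (x, k)) * T (\<beta>, x) (\<beta>', x') * G a' (x', k) * E a' b' \<beta>' \<beta>)"
    unfolding sum.cartesian_product
    by (rule sum.reindex_bij_witness[where i="\<lambda>(\<beta>, x, \<beta>', x', k, a', b'). (\<beta>, b', \<beta>', a', k, x, x')"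
          and j="\<lambda>(\<beta>, b', \<beta>', a', k, x, x'). (\<beta>, x, \<beta>', x', k, a', b')"]) auto
  also have "\<dots> = trace_pair_on (UNIV \<times> X) T (apply_first N (contracted_purification L G K))"
    unfolding trace_pair_on_def sum.cartesian_product' apply_first_contracted_purification[OF assms] E_def
    by (simp add: sum_distrib_left mult_ac)
  finally show ?thesis .
qed

lemma trace_pullback_test_qtensor:
  fixes T :: "(('b::finite) \<times> 'x) qop" and L :: "('a::finite) qop" and G :: "'a \<Rightarrow> 'x \<times> 'k \<Rightarrow> complex"
    and \<sigma> :: "'b qop"
  shows "qtrace (qmult (pullback_test G T X K) (qtensor \<sigma> (ptrace1 (ketbra (\<lambda>(a, a'). L a a')))))
    = trace_pair_on (UNIV \<times> X) T (qtensor \<sigma> (ptrace1 (contracted_purification L G K)))"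
proof -
  have "qtrace (qmult (pullback_test G T X K) (qtensor \<sigma> (ptrace1 (ketbra (\<lambda>(a, a'). L a a')))))
    = (\<Sum>\<beta>\<in>UNIV. \<Sum>b'\<in>UNIV. \<Sum>\<beta>'\<in>UNIV. \<Sum>a'\<in>UNIV. \<Sum>a\<in>UNIV. \<Sum>k\<in>K. \<Sum>x\<in>X. \<Sum>x'\<in>X.
        cnj (G b' (x, k)) * T (\<beta>, x) (\<beta>', x') * G a' (x', k) * (\<sigma> \<beta>' \<beta> * (L a a' * cnj (L a b'))))"
    unfolding qtrace_def qmult_def sum_UNIV_prod
    by (simp add: pullback_test_def qtensor_def ptrace1_def ketbra_def sum_distrib_left sum_distrib_right)
  also have "\<dots> = (\<Sum>\<beta>\<in>UNIV. \<Sum>x\<in>X. \<Sum>\<beta>'\<in>UNIV. \<Sum>x'\<in>X. \<Sum>a\<in>UNIV. \<Sum>k\<in>K. \<Sum>b'\<in>UNIV. \<Sum>a'\<in>UNIV.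
        cnj (G b' (x, k)) * T (\<beta>, x) (\<beta>', x') * G a' (x', k) * (\<sigma> \<beta>' \<beta> * (L a a' * cnj (L a b'))))"
    unfolding sum.cartesian_product
    by (rule sum.reindex_bij_witness[where i="\<lambda>(\<beta>, x, \<beta>', x', a, k, b', a'). (\<beta>, b', \<beta>', a', a, k, x, x')"
          and j="\<lambda>(\<beta>, b', \<beta>', a', a, k, x, x'). (\<beta>, x, \<beta>', x', a, k, b', a')"]) auto
  also have "\<dots> = trace_pair_on (UNIV \<times> X) T (qtensor \<sigma> (ptrace1 (contracted_purification L G K)))"
    unfolding trace_pair_on_def sum.cartesian_product'
    by (simp add: qtensor_def ptrace1_def contracted_purification_def sum_product cnj_sum
        sum_distrib_left mult_ac)
  finally show ?thesis .
qed

section \<open>The converse bound\<close>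

lemma Re_average_ge:
  assumes "K \<ge> 1" "\<And>m. m \<in> {1..K} \<Longrightarrow> c \<le> Re (f m)"
  shows "c \<le> Re ((\<Sum>m\<in>{1..K}. f m) / of_nat K)"
proof -
  have "(\<Sum>m\<in>{1..K}. c) \<le> (\<Sum>m\<in>{1..K}. Re (f m))"
    by (rule sum_mono) (rule assms(2))
  then show ?thesis using assms(1) by (simp add: Re_sum field_simps)
qed

text \<open>The state (1/K) \<Sum>_m |m\<rangle>\<langle>m| \<otimes> (Enc_m \<otimes> id)(|\<theta>\<rangle>\<langle>\<theta>|) of the channel input, the message
  register and Bob's share of the entanglement.\<close>

definition code_state ::
    "nat \<Rightarrow> (nat \<Rightarrow> ('ea::finite) qop \<Rightarrow> ('a::finite) qop) \<Rightarrow> ('ea \<times> ('eb::finite) \<Rightarrow> complex)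
     \<Rightarrow> ('a \<times> (nat \<times> 'eb)) qop" where
  "code_state K Enc \<theta> = block_diag (\<lambda>m i j. apply_first (Enc m) (ketbra \<theta>) i j / of_nat K)"

lemma psd_on_code_state:
  assumes "\<forall>m\<in>{1..K}. channel (Enc m)"
  shows "psd_on (UNIV \<times> ({1..K} \<times> UNIV)) (code_state K Enc \<theta>)"
  unfolding code_state_def
  by (rule psd_on_block_diag)
    (use assms in \<open>auto simp: channel_def intro!: psd_on_divide_of_nat psd_apply_first psd_ketbra\<close>)

lemma trace_code_state:
  assumes "\<forall>m\<in>{1..K}. channel (Enc m)" "unit_vec \<theta>" "K \<ge> 1"
  shows "(\<Sum>a\<in>UNIV. \<Sum>x\<in>{1..K} \<times> UNIV. code_state K Enc \<theta> (a, x) (a, x)) = 1"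
proof -
  have "(\<Sum>a\<in>UNIV. \<Sum>x\<in>{1..K} \<times> UNIV. code_state K Enc \<theta> (a, x) (a, x))
      = (\<Sum>m\<in>{1..K}. qtrace (apply_first (Enc m) (ketbra \<theta>)) / of_nat K)"
    unfolding code_state_def block_diag_def qtrace_def sum_UNIV_prod sum.cartesian_product'
    by (simp add: sum_divide_distrib) (rule sum.swap)
  also have "\<dots> = (\<Sum>m\<in>{1..K}. 1 / of_nat K)"
    using assms(1,2) by (simp add: qtrace_apply_first qtrace_ketbra)
  finally show ?thesis using assms(3) by simp
qed

lemma trace_decoder_apply_first_code_state:
  assumes "qlinear N"
  shows "trace_pair_on (UNIV \<times> ({1..K} \<times> UNIV)) (block_diag Dec) (apply_first N (code_state K Enc \<theta>))
    = (\<Sum>m\<in>{1..K}. qtrace (qmult (Dec m) (apply_first N (apply_first (Enc m) (ketbra \<theta>))))) / of_nat K"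
  unfolding code_state_def apply_first_block_diag[OF assms] apply_first_divide[OF assms]
    trace_pair_on_block_diag[OF finite_atLeastAtMost]
  by (simp add: qtrace_qmult trace_pair_on_def sum_divide_distrib)

lemma trace_decoder_product_code_state:
  assumes "\<forall>m\<in>{1..K}. channel (Enc m)" "povm K Dec" "unit_vec \<theta>" "density \<sigma>"
  shows "trace_pair_on (UNIV \<times> ({1..K} \<times> UNIV)) (block_diag Dec) (qtensor \<sigma> (ptrace1 (code_state K Enc \<theta>)))
    = 1 / of_nat K"
proof -
  have "trace_pair_on (UNIV \<times> ({1..K} \<times> UNIV)) (block_diag Dec) (qtensor \<sigma> (ptrace1 (code_state K Enc \<theta>)))
      = (\<Sum>m\<in>{1..K}. qtrace (qmult (Dec m) (qtensor \<sigma> (ptrace1 (ketbra \<theta>))))) / of_nat K"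
    using assms(1)
    unfolding code_state_def qtensor_ptrace1_block_diag trace_pair_on_block_diag[OF finite_atLeastAtMost]
    by (simp add: ptrace1_divide qtensor_divide qtrace_qmult_divide ptrace1_apply_first sum_divide_distrib)
  also have "\<dots> = qtrace (qmult qid (qtensor \<sigma> (ptrace1 (ketbra \<theta>)))) / of_nat K"
    using assms(2) unfolding povm_def by (simp flip: qtrace_qmult_sum)
  also have "\<dots> = 1 / of_nat K"
    using assms(4) unfolding density_def
    by (simp add: qmult_qid qtrace_qtensor qtrace_ptrace1 qtrace_ketbra[OF assms(3)])
  finally show ?thesis .
qed

lemma IH_ge_of_test:
  assumes M: "psd M" "psd (\<lambda>i j. qid i j - M i j)" "Re (qtrace (qmult M \<rho>)) \<ge> 1 - \<epsilon>"
    and type_II: "\<And>\<sigma>. density \<sigma> \<Longrightarrow> Re (qtrace (qmult M (qtensor \<sigma> (ptrace1 \<rho>)))) = 2 powr - R"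
  shows "ereal R \<le> IH \<epsilon> \<rho>"
  unfolding IH_def
proof (rule Inf_greatest, clarify)
  fix \<sigma> :: "'a qop" assume \<sigma>: "density \<sigma>"
  have "neglog2 (Re (qtrace (qmult M (qtensor \<sigma> (ptrace1 \<rho>))))) \<le> DH \<epsilon> \<rho> (qtensor \<sigma> (ptrace1 \<rho>))"
    unfolding DH_def using M by (intro Sup_upper) blast
  moreover have "neglog2 (2 powr - R) = ereal R"
    unfolding neglog2_def by simp
  ultimately show "ereal R \<le> DH \<epsilon> \<rho> (qtensor \<sigma> (ptrace1 \<rho>))"
    using type_II[OF \<sigma>] by simp
qed

lemma code_state_purification:
  fixes Enc :: "nat \<Rightarrow> ('ea::finite) qop \<Rightarrow> ('a::finite) qop" and \<theta> :: "'ea \<times> ('eb::finite) \<Rightarrow> complex"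
  assumes "\<forall>m\<in>{1..K}. channel (Enc m)" "unit_vec \<theta>" "K \<ge> 1"
  defines "X \<equiv> {1..K} \<times> (UNIV :: 'eb set)"
  shows "\<exists>L :: 'a qop. \<exists>G :: 'a \<Rightarrow> (nat \<times> 'eb) \<times> ('a \<times> (nat \<times> 'eb)) \<Rightarrow> complex.
    unit_vec (\<lambda>(a, a'). L a a')
    \<and> (\<forall>p\<in>UNIV \<times> X. \<forall>q\<in>UNIV \<times> X. code_state K Enc \<theta> p q = contracted_purification L G (UNIV \<times> X) p q)
    \<and> contraction_on UNIV (X \<times> (UNIV \<times> X)) G"
proof -
  have "finite X" unfolding X_def by simp
  moreover have "psd_on (UNIV \<times> X) (code_state K Enc \<theta>)"
    unfolding X_def by (rule psd_on_code_state[OF assms(1)])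
  ultimately obtain L :: "'a qop" and G :: "'a \<Rightarrow> (nat \<times> 'eb) \<times> ('a \<times> (nat \<times> 'eb)) \<Rightarrow> complex" where
    LG: "\<forall>p\<in>UNIV \<times> X. \<forall>q\<in>UNIV \<times> X. code_state K Enc \<theta> p q = contracted_purification L G (UNIV \<times> X) p q"
    and G: "contraction_on UNIV (X \<times> (UNIV \<times> X)) G"
    and L: "(\<Sum>a\<in>UNIV. \<Sum>a'\<in>UNIV. (cmod (L a a'))\<^sup>2) = Re (\<Sum>a\<in>UNIV. \<Sum>x\<in>X. code_state K Enc \<theta> (a, x) (a, x))"
    using psd_on_purification by blast
  have "unit_vec (\<lambda>(a, a'). L a a')"
    using L trace_code_state[OF assms(1-3)] unfolding unit_vec_def sum_UNIV_prod X_def by (simp del: Re_sum)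
  then show ?thesis using LG G by blast
qed

lemma IH_ge_log_of_code:
  fixes N :: "('a::finite) qop \<Rightarrow> ('b::finite) qop" and Enc :: "nat \<Rightarrow> ('ea::finite) qop \<Rightarrow> 'a qop"
    and \<theta> :: "'ea \<times> ('eb::finite) \<Rightarrow> complex" and Dec :: "nat \<Rightarrow> ('b \<times> 'eb) qop"
    and L :: "'a qop" and G :: "'a \<Rightarrow> (nat \<times> 'eb) \<times> ('a \<times> (nat \<times> 'eb)) \<Rightarrow> complex"
  assumes N: "channel N" and Enc: "\<forall>m\<in>{1..K}. channel (Enc m)" and \<theta>: "unit_vec \<theta>"
    and Dec: "povm K Dec" and K: "K \<ge> 1"
    and err: "\<forall>m\<in>{1..K}. 1 - Re (qtrace (qmult (Dec m) (apply_first N (apply_first (Enc m) (ketbra \<theta>))))) \<le> \<epsilon>"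
    and LG: "\<forall>p\<in>UNIV \<times> ({1..K} \<times> UNIV). \<forall>q\<in>UNIV \<times> ({1..K} \<times> UNIV).
      code_state K Enc \<theta> p q = contracted_purification L G (UNIV \<times> ({1..K} \<times> UNIV)) p q"
    and G: "contraction_on UNIV (({1..K} \<times> UNIV) \<times> (UNIV \<times> ({1..K} \<times> UNIV))) G"
  shows "ereal (log 2 K) \<le> IH \<epsilon> (apply_first N (ketbra (\<lambda>(a, a'). L a a')))"
proof (rule IH_ge_of_test)
  define X where "X = {1..K} \<times> (UNIV :: 'eb set)"
  define M where "M = pullback_test G (block_diag Dec) X (UNIV \<times> X)"
  have lin: "qlinear N" using N unfolding channel_def by blast
  have T: "psd_on (UNIV \<times> X) (block_diag Dec)"
    unfolding X_def by (rule psd_on_block_diag) (use Dec in \<open>auto simp: povm_def\<close>)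
  have finite_K: "finite (UNIV \<times> X :: ('a \<times> (nat \<times> 'eb)) set)" unfolding X_def by simp
  show "psd M" unfolding M_def by (rule psd_pullback_test[OF T])
  show "psd (\<lambda>i j. qid i j - M i j)"
    unfolding M_def using T block_diag_povm_le_id[OF Dec] G
    by (intro pullback_test_le_id) (auto simp: X_def)
  have "Re (qtrace (qmult M (apply_first N (ketbra (\<lambda>(a, a'). L a a')))))
    = Re (trace_pair_on (UNIV \<times> X) (block_diag Dec) (apply_first N (code_state K Enc \<theta>)))"
    unfolding M_def trace_pullback_test_apply_first[OF lin finite_K]
    using trace_pair_on_apply_first_cong[OF LG, of "block_diag Dec" N] by (simp add: X_def)
  also have "\<dots> = Re ((\<Sum>m\<in>{1..K}. qtrace (qmult (Dec m) (apply_first N (apply_first (Enc m) (ketbra \<theta>)))))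
      / of_nat K)"
    unfolding X_def trace_decoder_apply_first_code_state[OF lin] ..
  also have "\<dots> \<ge> 1 - \<epsilon>"
    by (rule Re_average_ge[OF K]) (use err in fastforce)
  finally show "Re (qtrace (qmult M (apply_first N (ketbra (\<lambda>(a, a'). L a a'))))) \<ge> 1 - \<epsilon>" .
  show "Re (qtrace (qmult M (qtensor \<sigma> (ptrace1 (apply_first N (ketbra (\<lambda>(a, a'). L a a'))))))) = 2 powr - log 2 K"
    if "density \<sigma>" for \<sigma>
  proof -
    have "qtrace (qmult M (qtensor \<sigma> (ptrace1 (apply_first N (ketbra (\<lambda>(a, a'). L a a'))))))
      = trace_pair_on (UNIV \<times> X) (block_diag Dec) (qtensor \<sigma> (ptrace1 (code_state K Enc \<theta>)))"
      unfolding M_def ptrace1_apply_first[OF N] trace_pullback_test_qtensor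
      using trace_pair_on_qtensor_ptrace1_cong[OF LG, of "block_diag Dec" \<sigma>] by (simp add: X_def)
    then show ?thesis
      using K unfolding X_def trace_decoder_product_code_state[OF Enc Dec \<theta> that]
      by (simp add: powr_minus_divide)
  qed
qed

theorem theorem2:
  fixes N :: "nat \<Rightarrow> ('a::finite) qop \<Rightarrow> ('b::finite) qop"
    and s K :: nat and \<epsilon> R :: real
    and \<theta> :: "('ea::finite) \<times> ('eb::finite) \<Rightarrow> complex"
    and Enc :: "nat \<Rightarrow> 'ea qop \<Rightarrow> 'a qop"
    and Dec :: "nat \<Rightarrow> ('b \<times> 'eb) qop"
  assumes "s \<ge> 1"
    and "\<forall>i\<in>{1..s}. channel (N i)"
    and "0 < \<epsilon>" and "\<epsilon> < 1"
    and "K \<ge> 1" and "2 powr R = real K"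
    and "EA_code K \<epsilon> s N \<theta> Enc Dec"
  shows "ereal R \<le> (SUP \<psi> \<in> {\<psi> :: 'a \<times> 'a \<Rightarrow> complex. unit_vec \<psi>}.
                     (INF i \<in> {1..s}. IH \<epsilon> (apply_first (N i) (ketbra \<psi>))))"
proof -
  have \<theta>: "unit_vec \<theta>" and Enc: "\<forall>m\<in>{1..K}. channel (Enc m)" and Dec: "povm K Dec"
    and err: "\<forall>m\<in>{1..K}. \<forall>i\<in>{1..s}.
        1 - Re (qtrace (qmult (Dec m) (apply_first (N i) (apply_first (Enc m) (ketbra \<theta>))))) \<le> \<epsilon>"
    using assms(7) unfolding EA_code_def by auto
  obtain L :: "'a qop" and G :: "'a \<Rightarrow> (nat \<times> 'eb) \<times> ('a \<times> (nat \<times> 'eb)) \<Rightarrow> complex" where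
    \<psi>: "unit_vec (\<lambda>(a, a'). L a a')"
    and LG: "\<forall>p\<in>UNIV \<times> ({1..K} \<times> UNIV). \<forall>q\<in>UNIV \<times> ({1..K} \<times> UNIV).
        code_state K Enc \<theta> p q = contracted_purification L G (UNIV \<times> ({1..K} \<times> UNIV)) p q"
    and G: "contraction_on UNIV (({1..K} \<times> UNIV) \<times> (UNIV \<times> ({1..K} \<times> UNIV))) G"
    using code_state_purification[OF Enc \<theta> assms(5)] by blast
  have R: "R = log 2 K" using log_powr_cancel[of 2 R] assms(6) by simp
  have "ereal R \<le> IH \<epsilon> (apply_first (N i) (ketbra (\<lambda>(a, a'). L a a')))" if "i \<in> {1..s}" for i
    unfolding R using assms(2) that err
    by (intro IH_ge_log_of_code[OF _ Enc \<theta> Dec assms(5) _ LG G]) auto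
  then show ?thesis
    using \<psi> by (intro SUP_upper2[of "\<lambda>(a, a'). L a a'"]) (auto intro: INF_greatest)
qed

end
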